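(* Let $P>1$, $\gamma>0$, and let $\hat x(t),l_1(t),l_{-1}(t)\in\mathbb{R}$. Assume $\max_{i\in\{-1,1\}}l_i(t)\le 0$ and \[ \min_{i\in\{-1,1\}}l_i(t)\le-\frac{P}{P-1}\hat x(t)^2. \] For $y(t)\in\mathbb{R}$ define $l_1(t+1),l_{-1}(t+1)$ as follows: if $l_1(t)\ge l_{-1}(t)$, \[ l_1(t+1)=l_1(t)-\gamma^2y(t)^2+\frac{(\gamma^2y(t))^2}{P+\gamma^2-1},\quad l_{-1}(t+1)=l_{-1}(t)-P\hat x(t)^2-\gamma^2y(t)^2+\frac{(P\hat x(t)+\gamma^2y(t))^2}{P+\gamma^2-1}; \] if $l_1(t)<l_{-1}(t)$, \[ l_1(t+1)=l_1(t)-P\hat x(t)^2-\gamma^2y(t)^2+\frac{(P\hat x(t)+\gamma^2y(t))^2}{P+\gamma^2-1},\quad l_{-1}(t+1)=l_{-1}(t)-\gamma^2y(t)^2+\frac{(\gamma^2y(t))^2}{P+\gamma^2-1}. \] Then $l_i(t+1)\le 0$ for $i\in\{-1,1\}$ (for every $y(t)\in\mathbb{R}$). *)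

theory Defs
  imports Complex_Main
begin

end

theory Submission
  imports Defs
begin

text \<open>
  Both update rules have the form \<open>l - q(y)\<close> with a quadratic \<open>q\<close> in \<open>y\<close> that can be
  minimised by completing the square. The update applied to the larger of the two values
  (which is \<open>\<le> 0\<close>) never increases it, and the update applied to the smaller one increases
  it by at most \<open>P / (P - 1) * x\<^sup>2\<close>, which is exactly the margin the second hypothesis provides.
\<close>

lemma quadratic_update_nonpos:
  fixes P g y :: real
  assumes "P \<ge> 1" and "g > 0"
  shows "- g * y\<^sup>2 + (g * y)\<^sup>2 / (P + g - 1) \<le> 0"
proof -
  have pos: "P + g - 1 > 0" using assms by simp
  have "- g * y\<^sup>2 + (g * y)\<^sup>2 / (P + g - 1) = - (g * (P - 1) * y\<^sup>2) / (P + g - 1)"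
    using pos by (simp add: field_simps power2_eq_square)
  also have "\<dots> \<le> 0" using pos assms by (intro divide_nonpos_pos) auto
  finally show ?thesis .
qed

lemma shifted_quadratic_update_le:
  fixes P g x y :: real
  assumes "P > 1" and "g > 0"
  shows "- P * x\<^sup>2 - g * y\<^sup>2 + (P * x + g * y)\<^sup>2 / (P + g - 1) \<le> P / (P - 1) * x\<^sup>2"
proof -
  have pos: "P + g - 1 > 0" and pos': "P - 1 > 0" using assms by simp_all
  have "- P * x\<^sup>2 - g * y\<^sup>2 + (P * x + g * y)\<^sup>2 / (P + g - 1) - P / (P - 1) * x\<^sup>2
        = - (g * (P * x - (P - 1) * y)\<^sup>2) / ((P - 1) * (P + g - 1))"
    using pos pos' by (simp add: field_simps power2_eq_square)
  also have "\<dots> \<le> 0" using pos pos' assms by (intro divide_nonpos_pos) auto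
  finally show ?thesis by simp
qed

theorem lemma5:
  fixes P \<gamma> x l1 lm1 y :: real
  assumes "P > 1" and "\<gamma> > 0"
    and "max l1 lm1 \<le> 0"
    and "min l1 lm1 \<le> - (P / (P - 1)) * x\<^sup>2"
  defines "l1' \<equiv> (if l1 \<ge> lm1
      then l1 - \<gamma>\<^sup>2 * y\<^sup>2 + (\<gamma>\<^sup>2 * y)\<^sup>2 / (P + \<gamma>\<^sup>2 - 1)
      else l1 - P * x\<^sup>2 - \<gamma>\<^sup>2 * y\<^sup>2 + (P * x + \<gamma>\<^sup>2 * y)\<^sup>2 / (P + \<gamma>\<^sup>2 - 1))"
    and "lm1' \<equiv> (if l1 \<ge> lm1
      then lm1 - P * x\<^sup>2 - \<gamma>\<^sup>2 * y\<^sup>2 + (P * x + \<gamma>\<^sup>2 * y)\<^sup>2 / (P + \<gamma>\<^sup>2 - 1)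
      else lm1 - \<gamma>\<^sup>2 * y\<^sup>2 + (\<gamma>\<^sup>2 * y)\<^sup>2 / (P + \<gamma>\<^sup>2 - 1))"
  shows "l1' \<le> 0 \<and> lm1' \<le> 0"
proof -
  have "\<gamma>\<^sup>2 > 0" using \<open>\<gamma> > 0\<close> by simp
  then have larger: "- \<gamma>\<^sup>2 * y\<^sup>2 + (\<gamma>\<^sup>2 * y)\<^sup>2 / (P + \<gamma>\<^sup>2 - 1) \<le> 0"
    and smaller: "- P * x\<^sup>2 - \<gamma>\<^sup>2 * y\<^sup>2 + (P * x + \<gamma>\<^sup>2 * y)\<^sup>2 / (P + \<gamma>\<^sup>2 - 1)
                  \<le> P / (P - 1) * x\<^sup>2"
    using quadratic_update_nonpos shifted_quadratic_update_le \<open>P > 1\<close> by auto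
  show ?thesis
  proof (cases "l1 \<ge> lm1")
    case True
    then have "l1 \<le> 0" and "lm1 \<le> - (P / (P - 1)) * x\<^sup>2" using assms(3,4) by auto
    then show ?thesis using True larger smaller unfolding l1'_def lm1'_def by simp
  next
    case False
    then have "lm1 \<le> 0" and "l1 \<le> - (P / (P - 1)) * x\<^sup>2" using assms(3,4) by auto
    then show ?thesis using False larger smaller unfolding l1'_def lm1'_def by simp
  qed
qed

end
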